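(* Let $P$ be an absolutely continuous distribution on $\mathbb R^{d+1}$ with strictly positive density function, let $(\mathbf X_i,Y_i)_{i\ge1}$ be i.i.d. with distribution $P$ and $P_n=\frac1n\sum_{i=1}^n\delta_{(\mathbf X_i,Y_i)}$. Then for every compact set $K\subset\Theta_{c_X,c_\varepsilon}$, $$\sup_{\theta\in K}\big|R(\theta,P_n)-R(\theta,P)\big|\to0\quad\text{almost surely}.$$
   Context: Fix integers $d\ge 1$, $G\ge 1$, a trimming level $\alpha\in[0,1)$ and constants $c_X\ge 1$, $c_\varepsilon\ge 1$. Write $\phi(\cdot;m,s^2)$ for the univariate normal density with mean $m$ and variance $s^2$, and $\phi_d(\cdot;\mu,\Sigma)$ for the $d$-variate normal density with mean $\mu$ and covariance $\Sigma$. A parameter is $\theta=(\pi_1,\dots,\pi_G,\mu_1,\dots,\mu_G,\Sigma_1,\dots,\Sigma_G,b_1^0,\dots,b_G^0,\mathbf b_1,\dots,\mathbf b_G,\sigma_1^2,\dots,\sigma_G^2)$ with $\pi_g\ge 0$, $\sum_g\pi_g=1$, $\mu_g\in\mathbb R^d$, $\Sigma_g$ a symmetric positive definite $d\times d$ matrix, $b_g^0\in\mathbb R$, $\mathbf b_g\in\mathbb R^d$, $\sigma_g^2>0$. $\Theta_{c_X,c_\varepsilon}$ is the set of such $\theta$ with $\lambda_{l_1}(\Sigma_{g_1})\le c_X\lambda_{l_2}(\Sigma_{g_2})$ for all $l_1,l_2\in\{1,\dots,d\}$, $g_1,g_2\in\{1,\dots,G\}$ (where $\lambda_l(\Sigma)$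 are the eigenvalues of $\Sigma$) and $\sigma_{g_1}^2\le c_\varepsilon\sigma_{g_2}^2$ for all $g_1,g_2$; it carries the Euclidean topology of the parameter coordinates. Set $D_g(\mathbf x,y;\theta)=\phi(y;\mathbf b_g'\mathbf x+b_g^0,\sigma_g^2)\,\phi_d(\mathbf x;\mu_g,\Sigma_g)\,\pi_g$ and $D(\mathbf x,y;\theta)=\sum_{g=1}^G D_g(\mathbf x,y;\theta)$. For a probability $Q$ on $\mathbb R^{d+1}$ with $(\mathbf X,Y)\sim Q$, define $R(\theta,Q)=\sup\{u: Q[D(\mathbf X,Y;\theta)\ge u]\ge 1-\alpha\}$. *)

theory Defs
  imports "HOL-Probability.Probability"
begin

text \<open>Parameter vector theta = (pi, mu, Sigma, b0, b, sigma2), each indexed by the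
  finite component type 'g (G = CARD('g)); covariates live in real^'n (d = CARD('n)).\<close>

type_synonym ('n, 'g) param =
  "(real^'g) \<times> ((real^'n)^'g) \<times> ((real^'n^'n)^'g) \<times> (real^'g) \<times> ((real^'n)^'g) \<times> (real^'g)"

definition mix_weight :: "('n::finite, 'g::finite) param \<Rightarrow> 'g \<Rightarrow> real" where
  "mix_weight \<theta> g = (case \<theta> of (w, m, S, b0, b, s2) \<Rightarrow> w $ g)"
definition mix_mean :: "('n::finite, 'g::finite) param \<Rightarrow> 'g \<Rightarrow> real^'n" where
  "mix_mean \<theta> g = (case \<theta> of (w, m, S, b0, b, s2) \<Rightarrow> m $ g)"
definition mix_cov :: "('n::finite, 'g::finite) param \<Rightarrow> 'g \<Rightarrow> real^'n^'n" where
  "mix_cov \<theta> g = (case \<theta> of (w, m, S, b0, b, s2) \<Rightarrow> S $ g)"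
definition mix_intercept :: "('n::finite, 'g::finite) param \<Rightarrow> 'g \<Rightarrow> real" where
  "mix_intercept \<theta> g = (case \<theta> of (w, m, S, b0, b, s2) \<Rightarrow> b0 $ g)"
definition mix_slope :: "('n::finite, 'g::finite) param \<Rightarrow> 'g \<Rightarrow> real^'n" where
  "mix_slope \<theta> g = (case \<theta> of (w, m, S, b0, b, s2) \<Rightarrow> b $ g)"
definition mix_var :: "('n::finite, 'g::finite) param \<Rightarrow> 'g \<Rightarrow> real" where
  "mix_var \<theta> g = (case \<theta> of (w, m, S, b0, b, s2) \<Rightarrow> s2 $ g)"

definition sym_pos_def :: "real^'n^'n \<Rightarrow> bool" where
  "sym_pos_def S \<longleftrightarrow> transpose S = S \<and> (\<forall>v. v \<noteq> 0 \<longrightarrow> v \<bullet> (S *v v) > 0)"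

definition mat_eigenvalues :: "real^'n^'n \<Rightarrow> real set" where
  "mat_eigenvalues S = {l. \<exists>v. v \<noteq> 0 \<and> S *v v = l *\<^sub>R v}"

definition mvn_density :: "real^'n \<Rightarrow> real^'n^'n \<Rightarrow> real^'n::finite \<Rightarrow> real" where
  "mvn_density \<mu> S x =
     exp (-(1/2) * ((x - \<mu>) \<bullet> (matrix_inv S *v (x - \<mu>))))
     / sqrt ((2 * pi) ^ CARD('n) * det S)"

definition Theta :: "real \<Rightarrow> real \<Rightarrow> ('n::finite, 'g::finite) param set" where
  "Theta cX ce = {\<theta>.
     (\<forall>g. mix_weight \<theta> g \<ge> 0) \<and> (\<Sum>g\<in>UNIV. mix_weight \<theta> g) = 1 \<and>
     (\<forall>g. sym_pos_def (mix_cov \<theta> g)) \<and> (\<forall>g. mix_var \<theta> g > 0) \<and>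
     (\<forall>g1 g2. \<forall>l1\<in>mat_eigenvalues (mix_cov \<theta> g1). \<forall>l2\<in>mat_eigenvalues (mix_cov \<theta> g2).
        l1 \<le> cX * l2) \<and>
     (\<forall>g1 g2. mix_var \<theta> g1 \<le> ce * mix_var \<theta> g2)}"

definition Dg :: "('n::finite, 'g::finite) param \<Rightarrow> 'g \<Rightarrow> real^'n \<Rightarrow> real \<Rightarrow> real" where
  "Dg \<theta> g x y =
     normal_density (mix_slope \<theta> g \<bullet> x + mix_intercept \<theta> g) (sqrt (mix_var \<theta> g)) y
     * mvn_density (mix_mean \<theta> g) (mix_cov \<theta> g) x * mix_weight \<theta> g"

definition Dmix :: "('n::finite, 'g::finite) param \<Rightarrow> real^'n \<Rightarrow> real \<Rightarrow> real" where
  "Dmix \<theta> x y = (\<Sum>g\<in>UNIV. Dg \<theta> g x y)"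

text \<open>Trimmed level R(theta,Q); Q is given through its set function A \<mapsto> Q[A].\<close>
definition trim_level :: "real \<Rightarrow> (((real^'n) \<times> real) set \<Rightarrow> real)
     \<Rightarrow> ('n::finite, 'g::finite) param \<Rightarrow> real" where
  "trim_level \<alpha> Q \<theta> = Sup {u. Q {(x, y). Dmix \<theta> x y \<ge> u} \<ge> 1 - \<alpha>}"

definition empirical :: "(nat \<Rightarrow> 'z) \<Rightarrow> nat \<Rightarrow> 'z set \<Rightarrow> real" where
  "empirical Z n A = real (card {i\<in>{1..n}. Z i \<in> A}) / real n"

end

theory Submission
  imports Defs
begin

(*
  A superlevel set of the mixture density of theta, intersected with a large ball C, lies
  between superlevel sets of the density of a nearby theta0 at levels shifted by epsilon,
  because the density is jointly continuous, hence uniformly continuous on K x C. So the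
  trimmed level of theta, for the empirical measure and for P alike, is within 2 epsilon of
  R(theta0, P) as soon as the masses of the two sets {D(theta0) >= R(theta0, P) +- epsilon}
  and of the complement of C are close to their P-values, which by Hoeffding's inequality
  and Borel-Cantelli holds eventually, almost surely. Strict positivity of the density of P
  provides the margin: for 0 < u < R(theta0, P) the mass P{D(theta0) >= u} exceeds 1 - alpha
  strictly, since between two such levels D(theta0) takes an open, hence P-charged, set of
  values. Compactness of K makes the local bounds uniform.
*)

section \<open>Determinants and inverses\<close>

lemma continuous_on_det [continuous_intros]:
  fixes f :: "'a::topological_space \<Rightarrow> real^'n::finite^'n"
  shows "continuous_on S f \<Longrightarrow> continuous_on S (\<lambda>x. det (f x))"
  unfolding det_def by (intro continuous_intros)

lemma matrix_inv_mult_vec_cramer: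
  fixes S :: "real^'n::finite^'n"
  assumes "det S \<noteq> 0"
  shows "matrix_inv S *v w = (\<chi> k. det (\<chi> i j. if j = k then w$i else S$i$j) / det S)"
proof -
  have "invertible S" using assms invertible_det_nz by blast
  then have "S ** matrix_inv S = mat 1"
    unfolding invertible_def matrix_inv_def by (rule someI_ex[THEN conjunct1])
  then have "S *v (matrix_inv S *v w) = w" by (simp add: matrix_vector_mul_assoc)
  then show ?thesis using cramer[OF assms] by blast
qed

lemma det_nonzero_if_kernel_trivial:
  fixes A :: "real^'n::finite^'n"
  assumes "\<And>v. A *v v = 0 \<Longrightarrow> v = 0"
  shows "det A \<noteq> 0"
  using assms invertible_det_nz invertible_left_inverse matrix_left_invertible_ker by metis

(* det does not vanish along the segment from the identity to S. *)
lemma det_pos_if_form_pos: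
  fixes S :: "real^'n::finite^'n"
  assumes pos: "\<And>v. v \<noteq> 0 \<Longrightarrow> v \<bullet> (S *v v) > 0"
  shows "det S > 0"
proof (rule ccontr)
  assume "\<not> det S > 0"
  define H where "H t = t *\<^sub>R S + (1 - t) *\<^sub>R mat 1" for t :: real
  have "continuous_on {0..1} (\<lambda>t. det (H t))"
    unfolding H_def by (intro continuous_intros)
  moreover have "det (H 1) \<le> 0" "det (H 0) = 1"
    using \<open>\<not> det S > 0\<close> by (simp_all add: H_def)
  ultimately obtain t where t: "0 \<le> t" "t \<le> 1" "det (H t) = 0"
    using IVT2'[of "\<lambda>t. det (H t)" 1 0 0] by auto
  have "v = 0" if "H t *v v = 0" for v
  proof (rule ccontr)
    assume "v \<noteq> 0"
    then have "0 < t * (v \<bullet> (S *v v)) + (1 - t) * (v \<bullet> v)"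
      using t pos[of v] by (cases "t = 0") (auto intro: add_pos_nonneg)
    also have "\<dots> = v \<bullet> (H t *v v)"
      by (simp add: H_def algebra_simps scaleR_matrix_vector_assoc[symmetric])
    finally show False using that by simp
  qed
  with t show False using det_nonzero_if_kernel_trivial by blast
qed

lemma sym_pos_def_det_pos: "sym_pos_def S \<Longrightarrow> det S > 0"
  by (rule det_pos_if_form_pos) (simp add: sym_pos_def_def)

section \<open>The mixture density\<close>

(* matrix_inv is defined by choice; Cramer's rule shows that it depends continuously on S. *)
lemma continuous_on_mvn_density [continuous_intros]:
  assumes "continuous_on A m" "continuous_on A S" "continuous_on A x"
    and "\<And>a. a \<in> A \<Longrightarrow> det (S a) \<noteq> 0"
  shows "continuous_on A (\<lambda>a. mvn_density (m a) (S a) (x a))"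
proof -
  let ?cramer = "\<lambda>a. \<chi> k. det (\<chi> i j. if j = k then (x a - m a)$i else S a$i$j) / det (S a)"
  have "continuous_on A (\<lambda>a. exp (-(1/2) * ((x a - m a) \<bullet> ?cramer a))
                               / sqrt ((2 * pi) ^ CARD('n) * det (S a)))"
  proof -
    have [continuous_intros]: "continuous_on A (\<lambda>a. if b then f a else g a)"
      if "continuous_on A f" "continuous_on A g" for b and f g :: "'a \<Rightarrow> real"
      using that by (cases b) auto
    show ?thesis using assms by (intro continuous_intros) auto
  qed
  then show ?thesis
    by (rule continuous_on_cong[THEN iffD1, rotated 2])
       (simp_all add: mvn_density_def matrix_inv_mult_vec_cramer assms(4))
qed

lemma continuous_on_normal_density [continuous_intros]:
  assumes "continuous_on A \<mu>" "continuous_on A \<sigma>" "continuous_on A y"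
    and "\<And>a. a \<in> A \<Longrightarrow> \<sigma> a \<noteq> 0"
  shows "continuous_on A (\<lambda>a. normal_density (\<mu> a) (\<sigma> a) (y a))"
  unfolding normal_density_def using assms by (intro continuous_intros) auto

lemma mix_param_eqs:
  "mix_weight \<theta> g = fst \<theta> $ g"
  "mix_mean \<theta> g = fst (snd \<theta>) $ g"
  "mix_cov \<theta> g = fst (snd (snd \<theta>)) $ g"
  "mix_intercept \<theta> g = fst (snd (snd (snd \<theta>))) $ g"
  "mix_slope \<theta> g = fst (snd (snd (snd (snd \<theta>)))) $ g"
  "mix_var \<theta> g = snd (snd (snd (snd (snd \<theta>)))) $ g"
  by (cases \<theta>; simp add: mix_weight_def mix_mean_def mix_cov_def mix_intercept_def
        mix_slope_def mix_var_def)+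

definition nondegenerate_params :: "('n::finite, 'g::finite) param set" where
  "nondegenerate_params = {\<theta>. \<forall>g. det (mix_cov \<theta> g) \<noteq> 0 \<and> mix_var \<theta> g > 0}"

definition mix_density :: "('n::finite, 'g::finite) param \<Rightarrow> (real^'n) \<times> real \<Rightarrow> real" where
  "mix_density \<theta> z = Dmix \<theta> (fst z) (snd z)"

lemma continuous_on_mix_density:
  "continuous_on (nondegenerate_params \<times> UNIV) (\<lambda>p. mix_density (fst p) (snd p))"
  unfolding mix_density_def Dmix_def Dg_def mix_param_eqs
  by (intro continuous_intros)
     (auto simp: nondegenerate_params_def mix_param_eqs, metis less_irrefl)

lemma tendsto_normal_density_at_top:
  assumes "\<sigma> \<noteq> 0"
  shows "(normal_density \<mu> \<sigma> \<longlongrightarrow> 0) at_top"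
proof -
  have "LIM y at_top. -\<mu> + y :> at_top"
    by (rule filterlim_tendsto_add_at_top[OF tendsto_const filterlim_ident])
  then have "LIM y at_top. (-\<mu> + y)\<^sup>2 * (1 / (2 * \<sigma>\<^sup>2)) :> at_top"
    using assms
    by (intro filterlim_at_top_mult_tendsto_pos[OF tendsto_const] filterlim_pow_at_top) auto
  then have "((\<lambda>y. exp (- ((-\<mu> + y)\<^sup>2 * (1 / (2 * \<sigma>\<^sup>2))))) \<longlongrightarrow> 0) at_top"
    by (intro filterlim_compose[OF exp_at_bot]) (simp add: filterlim_uminus_at_bot)
  then show ?thesis
    unfolding normal_density_def by (intro tendsto_mult_right_zero) simp
qed

lemma tendsto_mix_density_at_top:
  assumes "\<theta> \<in> nondegenerate_params"
  shows "((\<lambda>y. mix_density \<theta> (x, y)) \<longlongrightarrow> 0) at_top"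
  unfolding mix_density_def Dmix_def Dg_def fst_conv snd_conv
  using assms
  by (intro tendsto_null_sum tendsto_mult_left_zero filterlim_ident
        tendsto_normal_density_at_top[THEN filterlim_compose])
     (auto simp: nondegenerate_params_def, metis less_irrefl)

lemma ThetaD:
  assumes "\<theta> \<in> Theta cX ce"
  shows "sym_pos_def (mix_cov \<theta> g)" "mix_var \<theta> g > 0" "mix_weight \<theta> g \<ge> 0"
  using assms by (simp_all add: Theta_def)

lemma Theta_subset_nondegenerate_params: "Theta cX ce \<subseteq> nondegenerate_params"
proof
  fix \<theta> :: "('n::finite, 'g::finite) param"
  assume "\<theta> \<in> Theta cX ce"
  then have "det (mix_cov \<theta> g) > 0 \<and> mix_var \<theta> g > 0" for g
    using ThetaD sym_pos_def_det_pos by blast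
  then show "\<theta> \<in> nondegenerate_params"
    by (simp add: nondegenerate_params_def less_imp_neq[symmetric])
qed

lemma mix_density_nonneg:
  assumes "\<theta> \<in> Theta cX ce"
  shows "0 \<le> mix_density \<theta> z"
proof -
  have "0 \<le> mvn_density (mix_mean \<theta> g) (mix_cov \<theta> g) x" for g x
    using sym_pos_def_det_pos[OF ThetaD(1)[OF assms]]
    unfolding mvn_density_def by (auto intro!: divide_nonneg_pos)
  then show ?thesis
    unfolding mix_density_def Dmix_def Dg_def
    by (auto intro!: sum_nonneg mult_nonneg_nonneg ThetaD(3)[OF assms] normal_density_nonneg)
qed

definition superlevel :: "('n::finite, 'g::finite) param \<Rightarrow> real \<Rightarrow> ((real^'n) \<times> real) set" where
  "superlevel \<theta> u = {z. u \<le> mix_density \<theta> z}"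

lemma trim_level_superlevel: "trim_level \<alpha> Q \<theta> = Sup {u. 1 - \<alpha> \<le> Q (superlevel \<theta> u)}"
  unfolding trim_level_def superlevel_def mix_density_def by (simp add: case_prod_beta')

lemma superlevel_antimono: "u \<le> v \<Longrightarrow> superlevel \<theta> v \<subseteq> superlevel \<theta> u"
  by (auto simp: superlevel_def)

lemma superlevel_0:
  assumes "\<theta> \<in> Theta cX ce"
  shows "superlevel \<theta> 0 = UNIV"
  using mix_density_nonneg[OF assms] by (auto simp: superlevel_def)

lemma continuous_on_mix_density_at:
  assumes "\<theta> \<in> nondegenerate_params"
  shows "continuous_on UNIV (mix_density \<theta>)"
proof -
  have "continuous_on UNIV (\<lambda>z. mix_density (fst (\<theta>, z)) (snd (\<theta>, z)))"
    by (rule continuous_on_compose2[OF continuous_on_mix_density])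
       (use assms in \<open>auto intro: continuous_intros\<close>)
  then show ?thesis by simp
qed

lemma closed_superlevel: "\<theta> \<in> nondegenerate_params \<Longrightarrow> closed (superlevel \<theta> u)"
  unfolding superlevel_def
  by (rule closed_Collect_le[OF continuous_on_const continuous_on_mix_density_at])

lemma superlevel_borel: "\<theta> \<in> nondegenerate_params \<Longrightarrow> superlevel \<theta> u \<in> sets borel"
  by (rule borel_closed[OF closed_superlevel])

lemma mix_density_between:
  assumes "\<theta> \<in> nondegenerate_params" "0 < a" "a < b" "superlevel \<theta> b \<noteq> {}"
  shows "\<exists>z. a < mix_density \<theta> z \<and> mix_density \<theta> z < b"
proof -
  obtain z1 where z1: "b \<le> mix_density \<theta> z1"
    using assms(4) by (auto simp: superlevel_def)
  have "\<forall>\<^sub>F y in at_top. mix_density \<theta> (0, y) < a"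
    using tendsto_mix_density_at_top[OF assms(1)] assms(2) by (rule order_tendstoD)
  then obtain y where y: "mix_density \<theta> (0, y) < a"
    by (meson eventually_at_top_linorder order.refl)
  have "connected (range (mix_density \<theta>))"
    using continuous_on_mix_density_at[OF assms(1)] connected_UNIV by (rule connected_continuous_image)
  then have "{mix_density \<theta> (0, y) .. mix_density \<theta> z1} \<subseteq> range (mix_density \<theta>)"
    by (rule connected_contains_Icc) auto
  moreover have "(a + b) / 2 \<in> {mix_density \<theta> (0, y) .. mix_density \<theta> z1}"
    using y z1 assms(3) by auto
  ultimately have "(a + b) / 2 \<in> range (mix_density \<theta>)" by blast
  then obtain z where "mix_density \<theta> z = (a + b) / 2" by (metis rangeE)
  then show ?thesis using assms(3) by (intro exI[of _ z]) auto
qed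

section \<open>Trimmed levels\<close>

(* The hypothesis on t makes the set under Sup nonempty, resp. bounded above. *)
lemma trim_level_le:
  assumes antimono: "\<And>u v. u \<le> v \<Longrightarrow> Q (superlevel \<theta> v) \<le> Q (superlevel \<theta> u)"
    and "1 - \<alpha> \<le> Q (superlevel \<theta> t)" and "Q (superlevel \<theta> u) < 1 - \<alpha>"
  shows "trim_level \<alpha> Q \<theta> \<le> u"
  unfolding trim_level_superlevel
proof (rule cSup_least)
  show "{u. 1 - \<alpha> \<le> Q (superlevel \<theta> u)} \<noteq> {}" using assms(2) by blast
  show "s \<le> u" if "s \<in> {u. 1 - \<alpha> \<le> Q (superlevel \<theta> u)}" for s
    using that assms(3) antimono[of u s] by force
qed

lemma trim_level_ge:
  assumes antimono: "\<And>u v. u \<le> v \<Longrightarrow> Q (superlevel \<theta> v) \<le> Q (superlevel \<theta> u)"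
    and "Q (superlevel \<theta> t) < 1 - \<alpha>" and "1 - \<alpha> \<le> Q (superlevel \<theta> u)"
  shows "u \<le> trim_level \<alpha> Q \<theta>"
  unfolding trim_level_superlevel
proof (rule cSup_upper)
  show "bdd_above {u. 1 - \<alpha> \<le> Q (superlevel \<theta> u)}"
  proof (rule bdd_aboveI)
    show "s \<le> t" if "s \<in> {u. 1 - \<alpha> \<le> Q (superlevel \<theta> u)}" for s
      by (rule ccontr) (use that antimono[of t s] assms(2) in auto)
  qed
qed (use assms(3) in simp)

lemma superlevel_mass_below_trim_level:
  assumes antimono: "\<And>u v. u \<le> v \<Longrightarrow> Q (superlevel \<theta> v) \<le> Q (superlevel \<theta> u)"
    and "1 - \<alpha> \<le> Q (superlevel \<theta> t)" and "u < trim_level \<alpha> Q \<theta>"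
  shows "1 - \<alpha> \<le> Q (superlevel \<theta> u)"
proof -
  have "{u. 1 - \<alpha> \<le> Q (superlevel \<theta> u)} \<noteq> {}" using assms(2) by blast
  from less_cSupD[OF this assms(3)[unfolded trim_level_superlevel]]
  obtain s where "1 - \<alpha> \<le> Q (superlevel \<theta> s)" "u < s" by auto
  then show ?thesis using antimono[of u s] by simp
qed

(* On C each superlevel set of theta lies between superlevel sets of theta0 at levels
   shifted by epsilon; only -C escapes this sandwich. *)
lemma trim_level_close:
  fixes Q :: "((real^'n::finite) \<times> real) set \<Rightarrow> real" and \<theta> \<theta>0 :: "('n, 'g::finite) param"
  assumes Q_empty: "Q {} = 0"
    and Q_cover: "\<And>A B D. A \<in> sets borel \<Longrightarrow> B \<in> sets borel \<Longrightarrow> D \<in> sets borel \<Longrightarrow>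
                     A \<subseteq> B \<union> D \<Longrightarrow> Q A \<le> Q B + Q D"
    and nondeg: "\<theta> \<in> nondegenerate_params" "\<theta>0 \<in> nondegenerate_params" and "closed C"
    and close: "\<forall>z\<in>C. \<bar>mix_density \<theta> z - mix_density \<theta>0 z\<bar> < \<epsilon>" and "\<epsilon> > 0"
    and Q_0: "1 - \<alpha> \<le> Q (superlevel \<theta> 0)" and Q_bdd: "Q (superlevel \<theta> t) < 1 - \<alpha>"
    and upper: "Q (superlevel \<theta>0 (r + \<epsilon>)) + Q (- C) < 1 - \<alpha>"
    and lower: "0 < r - \<epsilon> \<Longrightarrow> 1 - \<alpha> \<le> Q (superlevel \<theta>0 (r - \<epsilon>)) - Q (- C)"
  shows "\<bar>trim_level \<alpha> Q \<theta> - r\<bar> \<le> 2 * \<epsilon>"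
proof -
  note borel = superlevel_borel[OF nondeg(1)] superlevel_borel[OF nondeg(2)]
    borel_open[OF open_Compl[OF \<open>closed C\<close>]]
  have antimono: "Q (superlevel \<theta> v) \<le> Q (superlevel \<theta> u)" if "u \<le> v" for u v
    using Q_cover[OF borel(1) borel(1) sets.empty_sets, of v u] superlevel_antimono[OF that, of \<theta>]
    by (simp add: Q_empty)
  have "superlevel \<theta> (r + 2 * \<epsilon>) \<subseteq> superlevel \<theta>0 (r + \<epsilon>) \<union> - C"
    using close by (force simp: superlevel_def)
  then have "Q (superlevel \<theta> (r + 2 * \<epsilon>)) < 1 - \<alpha>"
    using Q_cover[OF borel] upper by fastforce
  then have "trim_level \<alpha> Q \<theta> \<le> r + 2 * \<epsilon>"
    using trim_level_le[where Q=Q and \<theta>=\<theta>, OF antimono Q_0] by blast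
  moreover have "r - 2 * \<epsilon> \<le> trim_level \<alpha> Q \<theta>"
  proof (cases "0 < r - \<epsilon>")
    case True
    have "superlevel \<theta>0 (r - \<epsilon>) \<subseteq> superlevel \<theta> (r - 2 * \<epsilon>) \<union> - C"
      using close by (force simp: superlevel_def)
    then have "1 - \<alpha> \<le> Q (superlevel \<theta> (r - 2 * \<epsilon>))"
      using Q_cover[OF borel(2,1,3)] lower[OF True] by fastforce
    then show ?thesis using trim_level_ge[where Q=Q and \<theta>=\<theta>, OF antimono Q_bdd] by blast
  next
    case False
    then have "r - 2 * \<epsilon> \<le> 0" using \<open>\<epsilon> > 0\<close> by linarith
    also have "0 \<le> trim_level \<alpha> Q \<theta>"
      using trim_level_ge[where Q=Q and \<theta>=\<theta>, OF antimono Q_bdd Q_0] .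
    finally show ?thesis .
  qed
  ultimately show ?thesis by linarith
qed

section \<open>Empirical measures\<close>

lemma empirical_eq_sum_indicator:
  "empirical Z n A = (\<Sum>i\<in>{1..n}. indicator A (Z i)) / real n"
  by (simp add: empirical_def indicator_def sum.If_cases Int_def conj_commute)

lemma empirical_empty: "empirical Z n {} = 0"
  by (simp add: empirical_def)

lemma empirical_UNIV:
  assumes "n > 0"
  shows "empirical Z n UNIV = 1"
proof -
  have "{i\<in>{1..n}. Z i \<in> UNIV} = {1..n}" by blast
  then show ?thesis using assms by (simp add: empirical_def)
qed

lemma empirical_Compl:
  assumes "n > 0"
  shows "empirical Z n (- A) = 1 - empirical Z n A"
proof -
  have "(\<Sum>i\<in>{1..n}. indicator (- A) (Z i)) = (\<Sum>i\<in>{1..n}. 1 - indicator A (Z i) :: real)"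
    by (rule sum.cong) (auto simp: indicator_def)
  then show ?thesis
    using assms by (simp add: empirical_eq_sum_indicator sum_subtractf diff_divide_distrib)
qed

lemma empirical_cover:
  assumes "A \<subseteq> B \<union> D"
  shows "empirical Z n A \<le> empirical Z n B + empirical Z n D"
proof -
  have "indicator A (Z i) \<le> (indicator B (Z i) + indicator D (Z i) :: real)" for i
    using assms by (auto simp: indicator_def)
  then have "(\<Sum>i\<in>{1..n}. indicator A (Z i)) \<le> (\<Sum>i\<in>{1..n}. indicator B (Z i) + (indicator D (Z i) :: real))"
    by (rule sum_mono)
  then show ?thesis
    by (simp add: empirical_eq_sum_indicator sum.distrib add_divide_distrib[symmetric] divide_right_mono)
qed

lemma empirical_superlevel_eq_0:
  fixes g :: "'z \<Rightarrow> real"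
  shows "\<exists>u. empirical Z n {z. u \<le> g z} = 0"
proof
  let ?u = "1 + (\<Sum>i\<in>{1..n}. \<bar>g (Z i)\<bar>)"
  have "g (Z i) < ?u" if "i \<in> {1..n}" for i
    using member_le_sum[OF that, of "\<lambda>i. \<bar>g (Z i)\<bar>"] by simp
  then show "empirical Z n {z. ?u \<le> g z} = 0"
    by (force simp: empirical_def)
qed

lemma AE_eventually_empirical_less:
  fixes Z :: "nat \<Rightarrow> 'a \<Rightarrow> 'z::topological_space"
  assumes "prob_space M"
    and Z: "\<And>i. Z i \<in> measurable M borel"
    and indep: "prob_space.indep_vars M (\<lambda>_. borel) Z UNIV"
    and distr: "\<And>i. distr M borel (Z i) = P"
    and A: "A \<in> sets borel" and "measure P A < c"
  shows "AE \<omega> in M. \<forall>\<^sub>F n in sequentially. empirical (\<lambda>i. Z i \<omega>) n A < c"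
proof -
  interpret prob_space M by fact
  note Z[measurable] A[measurable]
  define \<delta> where "\<delta> = c - measure P A"
  have "\<delta> > 0" using \<open>measure P A < c\<close> by (simp add: \<delta>_def)
  define X where "X i \<omega> = (indicator A (Z i \<omega>) :: real)" for i \<omega>
  have X[measurable]: "X i \<in> borel_measurable M" for i
    unfolding X_def by measurable
  have EX: "expectation (X i) = measure P A" for i
  proof -
    have "expectation (X i) = integral\<^sup>L (distr M borel (Z i)) (indicator A)"
      unfolding X_def by (subst integral_distr) auto
    moreover have "space P = UNIV"
      using distr[of i] by (metis space_distr space_borel)
    ultimately show ?thesis by (simp add: distr)
  qed
  define B where "B n = {\<omega>\<in>space M. real n * (measure P A + \<delta>) \<le> (\<Sum>i\<in>{1..n}. X i \<omega>)}" for n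
  have [measurable]: "B n \<in> sets M" for n unfolding B_def by measurable
  have "measure M (B n) \<le> exp (-2 * \<delta>\<^sup>2) ^ n" for n
  proof (cases "n = 0")
    case False
    interpret Hoeffding_ineq M "{1..n}" X "\<lambda>_. 0" "\<lambda>_. 1" "\<Sum>i\<in>{1..n}. expectation (X i)"
    proof unfold_locales
      show "indep_vars (\<lambda>_. borel) X {1..n}"
        unfolding X_def by (rule indep_vars_compose2[OF indep_vars_subset[OF indep]]) auto
    qed (auto simp: X_def)
    have "measure M (B n) \<le> exp (-2 * (real n * \<delta>)\<^sup>2 / (\<Sum>i\<in>{1..n}. (1 - 0)\<^sup>2))"
      using Hoeffding_ineq_ge[of "real n * \<delta>"] \<open>\<delta> > 0\<close> False
      by (simp add: B_def EX algebra_simps)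
    also have "\<dots> = exp (-2 * \<delta>\<^sup>2) ^ n"
      using False by (simp add: power2_eq_square exp_of_nat_mult[symmetric] field_simps)
    finally show ?thesis .
  qed simp
  then have "summable (\<lambda>n. measure M (B n))"
    by (intro summable_comparison_test[OF _ summable_geometric[of "exp (-2 * \<delta>\<^sup>2)"]]) (use \<open>\<delta> > 0\<close> in auto)
  then have "AE \<omega> in M. \<forall>\<^sub>F n in sequentially. \<omega> \<in> space M - B n"
    by (intro borel_cantelli_AE1) (auto simp: emeasure_eq_measure)
  then show ?thesis
  proof (rule AE_mp, intro AE_I2 impI)
    fix \<omega> assume "\<forall>\<^sub>F n in sequentially. \<omega> \<in> space M - B n"
    then show "\<forall>\<^sub>F n in sequentially. empirical (\<lambda>i. Z i \<omega>) n A < c"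
      using eventually_gt_at_top[of 0]
      by eventually_elim
         (auto simp: B_def X_def empirical_eq_sum_indicator \<delta>_def divide_less_eq mult.commute)
  qed
qed

lemma AE_eventually_empirical_greater:
  fixes Z :: "nat \<Rightarrow> 'a \<Rightarrow> 'z::topological_space"
  assumes "prob_space M"
    and Z: "\<And>i. Z i \<in> measurable M borel"
    and indep: "prob_space.indep_vars M (\<lambda>_. borel) Z UNIV"
    and distr: "\<And>i. distr M borel (Z i) = P" and "prob_space P"
    and A: "A \<in> sets borel" and "c < measure P A"
  shows "AE \<omega> in M. \<forall>\<^sub>F n in sequentially. c < empirical (\<lambda>i. Z i \<omega>) n A"
proof -
  interpret P: prob_space P by fact
  have "sets P = sets borel" "space P = UNIV"
    using distr[of 0] by (metis sets_distr, metis space_distr space_borel)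
  then have "measure P (- A) = 1 - measure P A"
    using P.prob_compl[of A] A by (simp add: Compl_eq_Diff_UNIV)
  then have "AE \<omega> in M. \<forall>\<^sub>F n in sequentially. empirical (\<lambda>i. Z i \<omega>) n (- A) < 1 - c"
    using A \<open>c < measure P A\<close>
    by (intro AE_eventually_empirical_less[OF \<open>prob_space M\<close> Z indep distr]) auto
  then show ?thesis
  proof (rule AE_mp, intro AE_I2 impI)
    fix \<omega> assume "\<forall>\<^sub>F n in sequentially. empirical (\<lambda>i. Z i \<omega>) n (- A) < 1 - c"
    then show "\<forall>\<^sub>F n in sequentially. c < empirical (\<lambda>i. Z i \<omega>) n A"
      using eventually_gt_at_top[of 0] by eventually_elim (simp add: empirical_Compl)
  qed
qed

lemma empirical_trim_level_close:
  fixes Zs :: "nat \<Rightarrow> (real^'n::finite) \<times> real" and \<theta> \<theta>0 :: "('n, 'g::finite) param"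
  assumes "\<theta> \<in> Theta cX ce" "\<theta>0 \<in> nondegenerate_params" "0 \<le> \<alpha>" "\<alpha> < 1" "n > 0"
    and "closed C" "\<forall>z\<in>C. \<bar>mix_density \<theta> z - mix_density \<theta>0 z\<bar> < \<epsilon>" "\<epsilon> > 0"
    and "empirical Zs n (superlevel \<theta>0 (r + \<epsilon>)) + empirical Zs n (- C) < 1 - \<alpha>"
    and "0 < r - \<epsilon> \<Longrightarrow> 1 - \<alpha> \<le> empirical Zs n (superlevel \<theta>0 (r - \<epsilon>)) - empirical Zs n (- C)"
  shows "\<bar>trim_level \<alpha> (empirical Zs n) \<theta> - r\<bar> \<le> 2 * \<epsilon>"
proof -
  obtain u0 where "empirical Zs n (superlevel \<theta> u0) = 0"
    using empirical_superlevel_eq_0 unfolding superlevel_def by blast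
  then have "empirical Zs n (superlevel \<theta> u0) < 1 - \<alpha>" using \<open>\<alpha> < 1\<close> by simp
  moreover have "1 - \<alpha> \<le> empirical Zs n (superlevel \<theta> 0)"
    using superlevel_0[OF assms(1)] empirical_UNIV[OF \<open>n > 0\<close>, of Zs] \<open>0 \<le> \<alpha>\<close> by simp
  moreover have "\<theta> \<in> nondegenerate_params"
    using assms(1) Theta_subset_nondegenerate_params by blast
  ultimately show ?thesis
    using assms(2,6-)
    by (intro trim_level_close[where Q = "empirical Zs n" and t = u0])
       (auto intro: empirical_cover simp: empirical_empty)
qed

lemma (in finite_measure) decseq_measure_less:
  assumes "range A \<subseteq> sets M" "decseq A" "(\<Inter>k. A k) = {}" "\<eta> > 0"
  shows "\<exists>k. measure M (A k) < \<eta>"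
proof -
  have "(\<lambda>k. measure M (A k)) \<longlonglongrightarrow> 0"
    using finite_Lim_measure_decseq[OF assms(1,2)] assms(3) by simp
  from order_tendstoD(2)[OF this \<open>\<eta> > 0\<close>] show ?thesis
    by (auto simp: eventually_sequentially)
qed

lemma emeasure_density_open_pos:
  fixes f :: "'a::euclidean_space \<Rightarrow> real"
  assumes f: "f \<in> borel_measurable lborel" "\<And>z. f z > 0" and U: "open U" "U \<noteq> {}"
  shows "emeasure (density lborel f) U > 0"
proof (rule ccontr)
  assume "\<not> ?thesis"
  then have "(\<integral>\<^sup>+x. ennreal (f x) * indicator U x \<partial>lborel) = 0"
    using U f by (simp add: emeasure_density)
  then have "AE x in lborel. ennreal (f x) * indicator U x = 0"
    using U f by (subst (asm) nn_integral_0_iff_AE) auto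
  then have "AE x in lborel. x \<notin> U"
    by eventually_elim (use f(2) in \<open>auto simp: indicator_def ennreal_eq_0_iff not_le[symmetric]\<close>)
  then have "emeasure lborel U = 0"
    using U by (subst (asm) AE_iff_measurable[of U]) auto
  then have "U \<in> null_sets lborel"
    using U by (simp add: null_sets_def borel_open)
  then have "negligible U"
    by (simp add: negligible_iff_null_sets null_sets_completionI)
  with open_not_negligible[OF U] show False ..
qed

lemma AE_forall_pos_real:
  fixes Q :: "'a \<Rightarrow> real \<Rightarrow> bool"
  assumes "\<And>\<epsilon>. \<epsilon> > 0 \<Longrightarrow> AE x in M. Q x \<epsilon>"
    and mono: "\<And>x \<epsilon> \<epsilon>'. Q x \<epsilon> \<Longrightarrow> \<epsilon> \<le> \<epsilon>' \<Longrightarrow> Q x \<epsilon>'"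
  shows "AE x in M. \<forall>\<epsilon>>0. Q x \<epsilon>"
proof -
  have "AE x in M. \<forall>m::nat. Q x (inverse (Suc m))"
    using assms(1) by (simp add: AE_all_countable)
  then show ?thesis
  proof (rule AE_mp, intro AE_I2 impI allI)
    fix x and \<epsilon> :: real
    assume "\<forall>m::nat. Q x (inverse (Suc m))" "\<epsilon> > 0"
    moreover obtain m where "inverse (Suc m) < \<epsilon>"
      using reals_Archimedean \<open>\<epsilon> > 0\<close> by blast
    ultimately show "Q x \<epsilon>" using mono[of x _ \<epsilon>] by (meson less_imp_le)
  qed
qed

lemma AE_eventually_ball_compact:
  fixes K :: "'b::metric_space set"
  assumes "compact K"
    and local: "\<And>t0. t0 \<in> K \<Longrightarrow> \<exists>\<delta>>0. AE x in M. \<forall>\<^sub>F n in F. \<forall>t\<in>K. dist t t0 < \<delta> \<longrightarrow> Q x n t"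
  shows "AE x in M. \<forall>\<^sub>F n in F. \<forall>t\<in>K. Q x n t"
proof -
  have "\<forall>t0\<in>K. \<exists>\<delta>. \<delta> > 0 \<and> (AE x in M. \<forall>\<^sub>F n in F. \<forall>t\<in>K. dist t t0 < \<delta> \<longrightarrow> Q x n t)"
    using local by blast
  from bchoice[OF this] obtain d where d: "\<And>t0. t0 \<in> K \<Longrightarrow> d t0 > 0 \<and>
      (AE x in M. \<forall>\<^sub>F n in F. \<forall>t\<in>K. dist t t0 < d t0 \<longrightarrow> Q x n t)"
    by blast
  have cover: "K \<subseteq> (\<Union>t0\<in>K. ball t0 (d t0))"
    using d by (auto intro!: bexI)
  obtain T where T: "T \<subseteq> K" "finite T" "K \<subseteq> (\<Union>t0\<in>T. ball t0 (d t0))"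
    by (rule compactE_image[OF \<open>compact K\<close> _ cover]) auto
  have "AE x in M. \<forall>t0\<in>T. \<forall>\<^sub>F n in F. \<forall>t\<in>K. dist t t0 < d t0 \<longrightarrow> Q x n t"
    using d T(1) by (intro AE_finite_allI[OF T(2)]) blast
  then show ?thesis
  proof (rule AE_mp, intro AE_I2 impI)
    fix x assume "\<forall>t0\<in>T. \<forall>\<^sub>F n in F. \<forall>t\<in>K. dist t t0 < d t0 \<longrightarrow> Q x n t"
    then have "\<forall>\<^sub>F n in F. \<forall>t0\<in>T. \<forall>t\<in>K. dist t t0 < d t0 \<longrightarrow> Q x n t"
      by (rule eventually_ball_finite[OF T(2)])
    then show "\<forall>\<^sub>F n in F. \<forall>t\<in>K. Q x n t"
      by (rule eventually_mono) (use T(3) in \<open>force simp: dist_commute\<close>)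
  qed
qed

lemma compact_uniformly_close:
  fixes g :: "'a::metric_space \<Rightarrow> 'b::metric_space \<Rightarrow> 'c::metric_space"
  assumes "compact K" "compact C" "continuous_on (K \<times> C) (\<lambda>p. g (fst p) (snd p))" "\<epsilon> > 0"
  shows "\<exists>\<delta>>0. \<forall>t\<in>K. \<forall>t0\<in>K. dist t t0 < \<delta> \<longrightarrow> (\<forall>z\<in>C. dist (g t z) (g t0 z) < \<epsilon>)"
proof -
  have "uniformly_continuous_on (K \<times> C) (\<lambda>p. g (fst p) (snd p))"
    using assms by (intro compact_uniformly_continuous compact_Times)
  then obtain \<delta> where "\<delta> > 0" and \<delta>: "\<And>p p'. p \<in> K \<times> C \<Longrightarrow> p' \<in> K \<times> C \<Longrightarrow> dist p' p < \<delta> \<Longrightarrow>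
      dist (g (fst p') (snd p')) (g (fst p) (snd p)) < \<epsilon>"
    using \<open>\<epsilon> > 0\<close> unfolding uniformly_continuous_on_def by metis
  have "dist (g t z) (g t0 z) < \<epsilon>" if "t \<in> K" "t0 \<in> K" "dist t t0 < \<delta>" "z \<in> C" for t t0 z
    using \<delta>[of "(t0, z)" "(t, z)"] that by (simp add: dist_Pair_Pair)
  with \<open>\<delta> > 0\<close> show ?thesis by blast
qed

section \<open>Uniform consistency\<close>

locale trimmed_level_setting =
  fixes M :: "'a measure"
    and Z :: "nat \<Rightarrow> 'a \<Rightarrow> (real^'n::finite) \<times> real"
    and f :: "(real^'n) \<times> real \<Rightarrow> real"
    and P :: "((real^'n) \<times> real) measure"
    and K :: "('n, 'g::finite) param set"
    and \<alpha> cX ce :: real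
  assumes alpha: "0 \<le> \<alpha>" "\<alpha> < 1"
    and M: "prob_space M"
    and f: "f \<in> borel_measurable lborel" "\<And>z. f z > 0"
    and P_density: "P = density lborel (\<lambda>z. ennreal (f z))" and P: "prob_space P"
    and Z: "\<And>i. Z i \<in> measurable M borel"
    and indep: "prob_space.indep_vars M (\<lambda>_. borel) Z UNIV"
    and distr_Z: "\<And>i. distr M borel (Z i) = P"
    and K: "compact K" "K \<subseteq> Theta cX ce"
begin

interpretation P: prob_space P by (rule P)

abbreviation RP :: "('n, 'g) param \<Rightarrow> real" where
  "RP \<theta> \<equiv> trim_level \<alpha> (measure P) \<theta>"

lemma sets_P: "sets P = sets borel"
  using distr_Z[of 0] by (metis sets_distr)

lemma space_P: "space P = UNIV"
  using distr_Z[of 0] by (metis space_distr space_borel)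

lemma K_nondegenerate: "\<theta> \<in> K \<Longrightarrow> \<theta> \<in> nondegenerate_params"
  using K(2) Theta_subset_nondegenerate_params by blast

lemma measure_P_cover:
  assumes "A \<in> sets borel" "B \<in> sets borel" "D \<in> sets borel" "A \<subseteq> B \<union> D"
  shows "measure P A \<le> measure P B + measure P D"
proof -
  have "measure P A \<le> measure P (B \<union> D)"
    using assms sets_P by (intro P.finite_measure_mono) auto
  also have "\<dots> \<le> measure P B + measure P D"
    using assms sets_P by (intro measure_Un_le) auto
  finally show ?thesis .
qed

lemma measure_P_superlevel_antimono:
  "\<theta> \<in> K \<Longrightarrow> u \<le> v \<Longrightarrow> measure P (superlevel \<theta> v) \<le> measure P (superlevel \<theta> u)"
  using superlevel_borel[OF K_nondegenerate] sets_P
  by (intro P.finite_measure_mono superlevel_antimono) auto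

lemma measure_P_superlevel_0: "\<theta> \<in> K \<Longrightarrow> measure P (superlevel \<theta> 0) = 1"
  using superlevel_0[of \<theta> cX ce] K(2) space_P P.prob_space by auto

lemma measure_P_superlevel_less:
  assumes "\<theta> \<in> K" "\<eta> > 0"
  shows "\<exists>u. measure P (superlevel \<theta> u) < \<eta>"
proof -
  have "z \<notin> (\<Inter>k. superlevel \<theta> (real k))" for z
  proof -
    obtain k :: nat where "mix_density \<theta> z < real k"
      using reals_Archimedean2[of "mix_density \<theta> z"] by blast
    then show ?thesis by (auto simp: superlevel_def intro!: exI[of _ k])
  qed
  then have "(\<Inter>k. superlevel \<theta> (real k)) = {}" by blast
  then have "\<exists>k. measure P (superlevel \<theta> (real k)) < \<eta>"
    using superlevel_borel[OF K_nondegenerate[OF assms(1)]] sets_P assms(2)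
    by (intro P.decseq_measure_less) (auto simp: decseq_def intro!: superlevel_antimono)
  then show ?thesis by blast
qed

lemma measure_P_outside_cball_less:
  assumes "\<eta> > 0"
  shows "\<exists>\<rho>. measure P (- cball 0 \<rho>) < \<eta>"
proof -
  have "z \<notin> (\<Inter>k. - cball 0 (real k))" for z :: "(real^'n) \<times> real"
  proof -
    obtain k :: nat where "norm z < real k"
      using reals_Archimedean2[of "norm z"] by blast
    then show ?thesis by (auto intro!: exI[of _ k])
  qed
  then have "(\<Inter>k. - cball 0 (real k)) = ({} :: ((real^'n) \<times> real) set)" by blast
  then have "\<exists>k. measure P (- cball 0 (real k)) < \<eta>"
    using sets_P assms by (intro P.decseq_measure_less) (auto simp: decseq_def)
  then show ?thesis by blast
qed

lemma measure_P_open_pos: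
  assumes "open U" "U \<noteq> {}"
  shows "measure P U > 0"
  using emeasure_density_open_pos[OF f assms] P_density P.emeasure_eq_measure by auto

lemma measure_P_above_RP:
  assumes "\<theta> \<in> K" "\<epsilon> > 0"
  shows "measure P (superlevel \<theta> (RP \<theta> + \<epsilon>)) < 1 - \<alpha>"
proof (rule ccontr)
  assume "\<not> ?thesis"
  obtain u0 where "measure P (superlevel \<theta> u0) < 1 - \<alpha>"
    using measure_P_superlevel_less[OF assms(1), of "1 - \<alpha>"] alpha by auto
  with \<open>\<not> ?thesis\<close> have "RP \<theta> + \<epsilon> \<le> RP \<theta>"
    using trim_level_ge[of "measure P" \<theta> u0 \<alpha> "RP \<theta> + \<epsilon>"]
      measure_P_superlevel_antimono[OF assms(1)] by auto
  with assms show False by simp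
qed

(* Here the positivity of the density of P enters: between two levels below RP the mixture
   density takes an open, hence P-charged, set of values. *)
lemma measure_P_below_RP:
  assumes "\<theta> \<in> K" "0 < u" "u < RP \<theta>"
  shows "1 - \<alpha> < measure P (superlevel \<theta> u)"
proof -
  define v where "v = (u + RP \<theta>) / 2"
  have "u < v" "v < RP \<theta>" using assms by (auto simp: v_def)
  have nondeg: "\<theta> \<in> nondegenerate_params" using K_nondegenerate[OF assms(1)] .
  have Pv: "1 - \<alpha> \<le> measure P (superlevel \<theta> v)"
    using superlevel_mass_below_trim_level[of "measure P" \<theta> \<alpha> 0 v] measure_P_superlevel_antimono[OF assms(1)]
      measure_P_superlevel_0[OF assms(1)] alpha \<open>v < RP \<theta>\<close> by auto
  then have "superlevel \<theta> v \<noteq> {}" using alpha by auto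
  define U where "U = {z. u < mix_density \<theta> z} \<inter> {z. mix_density \<theta> z < v}"
  have "open U" unfolding U_def
    by (intro open_Int open_Collect_less continuous_on_const
        continuous_on_mix_density_at[OF nondeg])
  moreover have "U \<noteq> {}"
    using mix_density_between[OF nondeg \<open>0 < u\<close> \<open>u < v\<close> \<open>superlevel \<theta> v \<noteq> {}\<close>] by (auto simp: U_def)
  ultimately have "measure P U > 0" by (rule measure_P_open_pos)
  moreover have "measure P (superlevel \<theta> v \<union> U) = measure P (superlevel \<theta> v) + measure P U"
    using superlevel_borel[OF nondeg] \<open>open U\<close> sets_P
    by (intro P.finite_measure_Union) (auto simp: U_def superlevel_def)
  moreover have "measure P (superlevel \<theta> v \<union> U) \<le> measure P (superlevel \<theta> u)"
    using superlevel_borel[OF nondeg] \<open>u < v\<close> sets_P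
    by (intro P.finite_measure_mono) (auto simp: U_def superlevel_def)
  ultimately show ?thesis using Pv by linarith
qed

lemma measure_P_trim_level_close:
  assumes "\<theta> \<in> K" "\<theta>0 \<in> K"
    and "closed C" "\<forall>z\<in>C. \<bar>mix_density \<theta> z - mix_density \<theta>0 z\<bar> < \<epsilon>" "\<epsilon> > 0"
    and "measure P (superlevel \<theta>0 (r + \<epsilon>)) + measure P (- C) < 1 - \<alpha>"
    and "0 < r - \<epsilon> \<Longrightarrow> 1 - \<alpha> \<le> measure P (superlevel \<theta>0 (r - \<epsilon>)) - measure P (- C)"
  shows "\<bar>RP \<theta> - r\<bar> \<le> 2 * \<epsilon>"
proof -
  obtain u0 where "measure P (superlevel \<theta> u0) < 1 - \<alpha>"
    using measure_P_superlevel_less[OF assms(1), of "1 - \<alpha>"] alpha by auto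
  moreover have "1 - \<alpha> \<le> measure P (superlevel \<theta> 0)"
    using measure_P_superlevel_0[OF assms(1)] alpha by simp
  ultimately show ?thesis
    using K_nondegenerate[OF assms(1)] K_nondegenerate[OF assms(2)] assms(3-)
    by (intro trim_level_close[where Q = "measure P" and t = u0]) (auto intro: measure_P_cover)
qed

lemma RP_margin:
  assumes "\<theta>0 \<in> K" "\<epsilon> > 0"
  obtains \<gamma> where "\<gamma> > 0"
    and "measure P (superlevel \<theta>0 (RP \<theta>0 + \<epsilon>)) < 1 - \<alpha> - \<gamma>"
    and "0 < RP \<theta>0 - \<epsilon> \<Longrightarrow> 1 - \<alpha> + \<gamma> < measure P (superlevel \<theta>0 (RP \<theta>0 - \<epsilon>))"
proof -
  define gap_upper where "gap_upper = 1 - \<alpha> - measure P (superlevel \<theta>0 (RP \<theta>0 + \<epsilon>))"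
  define gap_lower where "gap_lower =
    (if 0 < RP \<theta>0 - \<epsilon> then measure P (superlevel \<theta>0 (RP \<theta>0 - \<epsilon>)) - (1 - \<alpha>) else 1)"
  have "gap_upper > 0"
    using measure_P_above_RP[OF assms] by (simp add: gap_upper_def)
  moreover have "gap_lower > 0"
    using measure_P_below_RP[OF assms(1), of "RP \<theta>0 - \<epsilon>"] assms(2) by (simp add: gap_lower_def)
  ultimately have "min gap_upper gap_lower / 2 > 0" "min gap_upper gap_lower / 2 < gap_upper"
    "min gap_upper gap_lower / 2 < gap_lower"
    by (auto simp: min_def)
  then show ?thesis
    by (intro that[of "min gap_upper gap_lower / 2"]) (auto simp: gap_upper_def gap_lower_def)
qed

lemma mix_density_uniformly_close:
  assumes "\<theta>0 \<in> K" "\<epsilon> > 0"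
  obtains \<delta> where "\<delta> > 0"
    and "\<And>\<theta> z. \<theta> \<in> K \<Longrightarrow> dist \<theta> \<theta>0 < \<delta> \<Longrightarrow> z \<in> cball 0 \<rho> \<Longrightarrow>
           \<bar>mix_density \<theta> z - mix_density \<theta>0 z\<bar> < \<epsilon>"
proof -
  have "continuous_on (K \<times> cball 0 \<rho>) (\<lambda>p. mix_density (fst p) (snd p))"
    by (rule continuous_on_subset[OF continuous_on_mix_density]) (auto dest: K_nondegenerate)
  from compact_uniformly_close[OF K(1) compact_cball this assms(2)] assms(1) that show ?thesis
    by (auto simp: dist_real_def)
qed

lemma local_uniform_bound:
  assumes \<theta>0: "\<theta>0 \<in> K" and "\<epsilon> > 0"
  shows "\<exists>\<delta>>0. AE \<omega> in M. \<forall>\<^sub>F n in sequentially. \<forall>\<theta>\<in>K. dist \<theta> \<theta>0 < \<delta> \<longrightarrow>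
           \<bar>trim_level \<alpha> (empirical (\<lambda>i. Z i \<omega>) n) \<theta> - RP \<theta>\<bar> \<le> 4 * \<epsilon>"
proof -
  define r where "r = RP \<theta>0"
  note L0_borel = superlevel_borel[OF K_nondegenerate[OF \<theta>0]]
  obtain \<gamma> where "\<gamma> > 0" and \<gamma>_upper: "measure P (superlevel \<theta>0 (r + \<epsilon>)) < 1 - \<alpha> - \<gamma>"
    and \<gamma>_lower: "0 < r - \<epsilon> \<Longrightarrow> 1 - \<alpha> + \<gamma> < measure P (superlevel \<theta>0 (r - \<epsilon>))"
    using RP_margin[OF \<theta>0 \<open>\<epsilon> > 0\<close>] unfolding r_def by blast
  obtain \<rho> where \<rho>: "measure P (- cball 0 \<rho>) < \<gamma>"
    using measure_P_outside_cball_less[OF \<open>\<gamma> > 0\<close>] by blast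
  define C where "C = cball (0 :: (real^'n) \<times> real) \<rho>"
  obtain \<delta> where "\<delta> > 0" and close:
    "\<And>\<theta> z. \<theta> \<in> K \<Longrightarrow> dist \<theta> \<theta>0 < \<delta> \<Longrightarrow> z \<in> C \<Longrightarrow> \<bar>mix_density \<theta> z - mix_density \<theta>0 z\<bar> < \<epsilon>"
    using mix_density_uniformly_close[OF \<theta>0 \<open>\<epsilon> > 0\<close>] unfolding C_def by blast
  have "AE \<omega> in M. \<forall>\<^sub>F n in sequentially. empirical (\<lambda>i. Z i \<omega>) n (superlevel \<theta>0 (r + \<epsilon>)) < 1 - \<alpha> - \<gamma>"
    using \<gamma>_upper by (intro AE_eventually_empirical_less[OF M Z indep distr_Z L0_borel])
  moreover have "AE \<omega> in M. \<forall>\<^sub>F n in sequentially. empirical (\<lambda>i. Z i \<omega>) n (- C) < \<gamma>"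
    using \<rho> by (intro AE_eventually_empirical_less[OF M Z indep distr_Z])
      (simp_all add: C_def borel_closed)
  moreover have "AE \<omega> in M. \<forall>\<^sub>F n in sequentially.
      0 < r - \<epsilon> \<longrightarrow> 1 - \<alpha> + \<gamma> < empirical (\<lambda>i. Z i \<omega>) n (superlevel \<theta>0 (r - \<epsilon>))"
  proof (cases "0 < r - \<epsilon>")
    case True
    then show ?thesis
      using AE_eventually_empirical_greater[OF M Z indep distr_Z P L0_borel \<gamma>_lower[OF True]]
      by (auto elim: eventually_mono)
  qed simp
  ultimately have "AE \<omega> in M. \<forall>\<^sub>F n in sequentially. \<forall>\<theta>\<in>K. dist \<theta> \<theta>0 < \<delta> \<longrightarrow>
           \<bar>trim_level \<alpha> (empirical (\<lambda>i. Z i \<omega>) n) \<theta> - RP \<theta>\<bar> \<le> 4 * \<epsilon>"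
  proof eventually_elim
    case (elim \<omega>)
    then show ?case using eventually_gt_at_top[of 0]
    proof eventually_elim
      case (elim n)
      show ?case
      proof (intro ballI impI)
        fix \<theta> assume "\<theta> \<in> K" "dist \<theta> \<theta>0 < \<delta>"
        then have close_\<theta>: "\<forall>z\<in>C. \<bar>mix_density \<theta> z - mix_density \<theta>0 z\<bar> < \<epsilon>"
          using close by blast
        have "\<bar>trim_level \<alpha> (empirical (\<lambda>i. Z i \<omega>) n) \<theta> - r\<bar> \<le> 2 * \<epsilon>"
          using \<open>\<theta> \<in> K\<close> K(2) K_nondegenerate[OF \<theta>0] alpha elim close_\<theta> \<open>\<epsilon> > 0\<close>
          by (intro empirical_trim_level_close) (auto simp: C_def)
        moreover have "\<bar>RP \<theta> - r\<bar> \<le> 2 * \<epsilon>"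
          using \<open>\<theta> \<in> K\<close> \<theta>0 close_\<theta> \<open>\<epsilon> > 0\<close> \<rho> \<gamma>_upper \<gamma>_lower
          by (intro measure_P_trim_level_close) (auto simp: C_def)
        ultimately show "\<bar>trim_level \<alpha> (empirical (\<lambda>i. Z i \<omega>) n) \<theta> - RP \<theta>\<bar> \<le> 4 * \<epsilon>"
          by linarith
      qed
    qed
  qed
  with \<open>\<delta> > 0\<close> show ?thesis by blast
qed

end

theorem lemma8:
  fixes M :: "'a measure"
    and Z :: "nat \<Rightarrow> 'a \<Rightarrow> (real^'n::finite) \<times> real"
    and f :: "(real^'n) \<times> real \<Rightarrow> real"
    and P :: "((real^'n) \<times> real) measure"
    and K :: "('n, 'g::finite) param set"
    and \<alpha> cX ce :: real
  assumes "0 \<le> \<alpha>" "\<alpha> < 1" "cX \<ge> 1" "ce \<ge> 1"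
    and "prob_space M"
    and "f \<in> borel_measurable lborel" "\<forall>z. f z > 0"
    and "P = density lborel (\<lambda>z. ennreal (f z))" "prob_space P"
    and "\<forall>i. Z i \<in> measurable M borel"
    and "prob_space.indep_vars M (\<lambda>_. borel) Z UNIV"
    and "\<forall>i. distr M borel (Z i) = P"
    and "compact K" "K \<subseteq> Theta cX ce"
  shows "AE \<omega> in M. \<forall>\<epsilon>>0. \<forall>\<^sub>F n in sequentially. \<forall>\<theta>\<in>K.
           \<bar>trim_level \<alpha> (empirical (\<lambda>i. Z i \<omega>) n) \<theta> - trim_level \<alpha> (measure P) \<theta>\<bar> \<le> \<epsilon>"
proof -
  interpret trimmed_level_setting M Z f P K \<alpha> cX ce
    by (rule trimmed_level_setting.intro)
       (fact assms(1,2,5,6,8,9,11,13,14) assms(7,10,12)[rule_format])+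
  have uniform: "AE \<omega> in M. \<forall>\<^sub>F n in sequentially. \<forall>\<theta>\<in>K.
      \<bar>trim_level \<alpha> (empirical (\<lambda>i. Z i \<omega>) n) \<theta> - RP \<theta>\<bar> \<le> \<epsilon>" if "\<epsilon> > 0" for \<epsilon>
    using K(1) by (rule AE_eventually_ball_compact)
      (use local_uniform_bound[of _ "\<epsilon> / 4"] that in auto)
  show ?thesis
    by (rule AE_forall_pos_real[OF uniform]) (simp, erule eventually_mono, force)
qed

end
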